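(* Let $E$ be a closed type of system $\mathcal F$ not containing the type constant $O$. If $E$ is an input type, then $E$ is an output type.
   Context: $\lambda$-terms are those of the untyped $\lambda$-calculus; $Fv(t)$ denotes the free variables of $t$; a term is normal if it contains no $\beta$-redex. Types of system $\mathcal F$ are built from type variables and type constants (atomic types on which one cannot quantify; $O$ is such a constant) with $\rightarrow$ and $\forall$; only proper types are considered (in every $\forall X A$, $X$ occurs free in $A$). A type is closed if it has no free type variable. Typing judgements $\Gamma\vdash_{\mathcal F} t:A$, with $\Gamma = x_1:A_1,\dots,x_n:A_n$, are generated by: (ax) $\Gamma \vdash x_i : A_i$; ($\rightarrow_i$) from $\Gamma, x:B \vdash t : C$ infer $\Gamma \vdash \lambda x t : B \rightarrow C$; ($\rightarrow_e$) from $\Gamma \vdash u : B\rightarrow C$ and $\Gamma \vdash v : B$ infer $\Gamma \vdash (u)v : C$; ($\forall_i$) from $\Gamma \vdash t : A$ with $X$ not free in $\Gamma$ infer $\Gamma \vdash t : \forall X A$; ($\forall_e$) from $\Gamma \vdash t : \forall X A$ infer $\Gamma \vdash t : A[C/X]$ for any type $C$. The system $\mathcal F_0$ is system $\mathcal F$ without the rule ($\forall_e$); its judgements are written $\vdash_{\mathcal F_0}$. A closed type $E$ is an input type if for every normal $\lambda$-term $t$, $\vdash_{\mathcal F} t : E$ implies $\vdash_{\mathcal F_0} t : E$. A closed type $S$ not containing $O$ is an output type if for every normal $\lambda$-term $t$ and term variable $\alpha$, $\alpha : O \vdash_{\mathcal F} t : S$ implies $\alpha\notin Fv(t)$. *)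

theory Defs
  imports Main
begin

datatype trm = Var nat | Lam nat trm | App trm trm

fun fv :: "trm \<Rightarrow> nat set" where
  "fv (Var x) = {x}"
| "fv (Lam x t) = fv t - {x}"
| "fv (App u v) = fv u \<union> fv v"

fun normal :: "trm \<Rightarrow> bool" where
  "normal (Var x) = True"
| "normal (Lam x t) = normal t"
| "normal (App u v) = ((\<forall>x t. u \<noteq> Lam x t) \<and> normal u \<and> normal v)"

section \<open>Types of system F with type constants (de Bruijn type variables)\<close>

datatype ty = TV nat | TC nat | Arr ty ty | All ty

definition tO :: ty where "tO = TC 0"

fun has_O :: "ty \<Rightarrow> bool" where
  "has_O (TV i) = False"
| "has_O (TC c) = (c = 0)"
| "has_O (Arr A B) = (has_O A \<or> has_O B)"
| "has_O (All A) = has_O A"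

fun occurs :: "nat \<Rightarrow> ty \<Rightarrow> bool" where
  "occurs k (TV i) = (i = k)"
| "occurs k (TC c) = False"
| "occurs k (Arr A B) = (occurs k A \<or> occurs k B)"
| "occurs k (All A) = occurs (Suc k) A"

fun proper :: "ty \<Rightarrow> bool" where
  "proper (TV i) = True"
| "proper (TC c) = True"
| "proper (Arr A B) = (proper A \<and> proper B)"
| "proper (All A) = (occurs 0 A \<and> proper A)"

fun closed_at :: "nat \<Rightarrow> ty \<Rightarrow> bool" where
  "closed_at k (TV i) = (i < k)"
| "closed_at k (TC c) = True"
| "closed_at k (Arr A B) = (closed_at k A \<and> closed_at k B)"
| "closed_at k (All A) = closed_at (Suc k) A"

definition closed_ty :: "ty \<Rightarrow> bool" where "closed_ty A = closed_at 0 A"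

fun lift :: "nat \<Rightarrow> ty \<Rightarrow> ty" where
  "lift k (TV i) = (if i < k then TV i else TV (Suc i))"
| "lift k (TC c) = TC c"
| "lift k (Arr A B) = Arr (lift k A) (lift k B)"
| "lift k (All A) = All (lift (Suc k) A)"

fun subst :: "ty \<Rightarrow> nat \<Rightarrow> ty \<Rightarrow> ty" where
  "subst (TV i) k C = (if i < k then TV i else if i = k then C else TV (i - 1))"
| "subst (TC c) k C = TC c"
| "subst (Arr A B) k C = Arr (subst A k C) (subst B k C)"
| "subst (All A) k C = All (subst A (Suc k) (lift 0 C))"

section \<open>Typing: system F (elim = True) and F0 (elim = False, no \<forall>-elimination)\<close>

type_synonym ctx = "(nat \<times> ty) list"

inductive typing :: "bool \<Rightarrow> ctx \<Rightarrow> trm \<Rightarrow> ty \<Rightarrow> bool" where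
  ax: "map_of \<Gamma> x = Some A \<Longrightarrow> typing b \<Gamma> (Var x) A"
| arr_i: "proper B \<Longrightarrow> typing b ((x, B) # \<Gamma>) t C \<Longrightarrow> typing b \<Gamma> (Lam x t) (Arr B C)"
| arr_e: "typing b \<Gamma> u (Arr B C) \<Longrightarrow> typing b \<Gamma> v B \<Longrightarrow> typing b \<Gamma> (App u v) C"
| all_i: "typing b (map (\<lambda>(y, T). (y, lift 0 T)) \<Gamma>) t A \<Longrightarrow> occurs 0 A
           \<Longrightarrow> typing b \<Gamma> t (All A)"
| all_e: "b \<Longrightarrow> typing b \<Gamma> t (All A) \<Longrightarrow> proper C \<Longrightarrow> typing b \<Gamma> t (subst A 0 C)"

abbreviation typF :: "ctx \<Rightarrow> trm \<Rightarrow> ty \<Rightarrow> bool" where "typF \<equiv> typing True"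
abbreviation typF0 :: "ctx \<Rightarrow> trm \<Rightarrow> ty \<Rightarrow> bool" where "typF0 \<equiv> typing False"

definition input_type :: "ty \<Rightarrow> bool" where
  "input_type E \<longleftrightarrow> proper E \<and> closed_ty E \<and>
     (\<forall>t. normal t \<longrightarrow> typF [] t E \<longrightarrow> typF0 [] t E)"

definition output_type :: "ty \<Rightarrow> bool" where
  "output_type S \<longleftrightarrow> proper S \<and> closed_ty S \<and> \<not> has_O S \<and>
     (\<forall>t \<alpha>. normal t \<longrightarrow> typF [(\<alpha>, tO)] t S \<longrightarrow> \<alpha> \<notin> fv t)"

end

theory Submission
  imports Defs
begin

text \<open>Suppose \<open>\<alpha> : O \<turnstile> t : E\<close> with \<open>t\<close> normal and \<open>\<alpha>\<close> free in \<open>t\<close>. Since \<open>E\<close> does not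
  contain \<open>O\<close>, replacing \<open>O\<close> by \<open>D = \<forall>X. X \<rightarrow> \<dots> \<rightarrow> X\<close> (\<open>k + 2\<close> occurrences of \<open>X\<close>) still
  types \<open>t\<close> with \<open>E\<close>; substituting the closed inhabitant \<open>\<lambda>x\<^sub>0 \<dots> x\<^sub>k. x\<^sub>k\<close> of \<open>D\<close> for \<open>\<alpha>\<close>
  yields a closed term of type \<open>E\<close>, which is still normal because a variable of the atomic
  type \<open>O\<close> is never applied. As \<open>E\<close> is an input type, this term is typable in \<open>\<F>\<^sub>0\<close>. But
  without \<open>\<forall>\<close>-elimination the types of a normal term are bounded by those of its context and
  result, so no run of consecutive abstractions can be longer than the size of \<open>E\<close>; taking
  \<open>k = size E\<close> gives a contradiction.\<close>

lemma map_of_map_snd: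
  "map_of (map (\<lambda>(y, T). (y, g T)) \<Gamma>) x = map_option g (map_of \<Gamma> x)"
  by (induction \<Gamma>) auto

lemma lift_closed_at: "closed_at j A \<Longrightarrow> j \<le> k \<Longrightarrow> lift k A = A"
  by (induction A arbitrary: j k) fastforce+

lemma subst_closed_at: "closed_at j A \<Longrightarrow> j \<le> k \<Longrightarrow> subst A k C = A"
  by (induction A arbitrary: j k C) fastforce+

lemma not_occurs_closed_at: "closed_at j A \<Longrightarrow> j \<le> k \<Longrightarrow> \<not> occurs k A"
  by (induction A arbitrary: j k) fastforce+

lemma size_lift [simp]: "size (lift k A) = size A"
  by (induction A arbitrary: k) auto

fun replace_O :: "ty \<Rightarrow> ty \<Rightarrow> ty" where
  "replace_O D (TV i) = TV i"
| "replace_O D (TC c) = (if c = 0 then D else TC c)"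
| "replace_O D (Arr A B) = Arr (replace_O D A) (replace_O D B)"
| "replace_O D (All A) = All (replace_O D A)"

lemma replace_O_lift: "closed_ty D \<Longrightarrow> replace_O D (lift k A) = lift k (replace_O D A)"
  by (induction A arbitrary: k) (auto simp: closed_ty_def lift_closed_at)

lemma replace_O_subst:
  "closed_ty D \<Longrightarrow> replace_O D (subst A k C) = subst (replace_O D A) k (replace_O D C)"
  by (induction A arbitrary: k C) (auto simp: closed_ty_def subst_closed_at replace_O_lift)

lemma occurs_replace_O: "closed_ty D \<Longrightarrow> occurs k (replace_O D A) = occurs k A"
  by (induction A arbitrary: k) (auto simp: closed_ty_def dest: not_occurs_closed_at)

lemma proper_replace_O: "closed_ty D \<Longrightarrow> proper D \<Longrightarrow> proper A \<Longrightarrow> proper (replace_O D A)"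
  by (induction A) (auto simp: occurs_replace_O)

lemma replace_O_no_O: "\<not> has_O A \<Longrightarrow> replace_O D A = A"
  by (induction A) auto

lemma typing_replace_O:
  assumes "typing b \<Gamma> t A" "closed_ty D" "proper D"
  shows "typing b (map (\<lambda>(y, T). (y, replace_O D T)) \<Gamma>) t (replace_O D A)"
  using assms
proof (induction rule: typing.induct)
  case (ax \<Gamma> x A b)
  then show ?case by (intro typing.ax) (simp add: map_of_map_snd)
next
  case (arr_i B b x \<Gamma> t C)
  then show ?case by (auto intro!: typing.arr_i proper_replace_O)
next
  case (arr_e b \<Gamma> u B C v)
  then show ?case by (auto intro: typing.arr_e)
next
  case (all_i b \<Gamma> t A)
  have "map (\<lambda>(y, T). (y, lift 0 T)) (map (\<lambda>(y, T). (y, replace_O D T)) \<Gamma>)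
      = map (\<lambda>(y, T). (y, replace_O D T)) (map (\<lambda>(y, T). (y, lift 0 T)) \<Gamma>)"
    using all_i.prems by (auto simp: replace_O_lift)
  with all_i have "typing b (map (\<lambda>(y, T). (y, lift 0 T)) (map (\<lambda>(y, T). (y, replace_O D T)) \<Gamma>))
      t (replace_O D A)"
    by metis
  with all_i show ?case by (auto intro!: typing.all_i simp: occurs_replace_O)
next
  case (all_e b \<Gamma> t A C)
  then show ?case
    by (auto simp: replace_O_subst intro!: typing.all_e[where A = "replace_O D A"] proper_replace_O)
qed

text \<open>No capture avoidance: this is only ever applied to closed replacement terms.\<close>

fun trm_subst :: "trm \<Rightarrow> nat \<Rightarrow> trm \<Rightarrow> trm" where
  "trm_subst (Var x) a u = (if x = a then u else Var x)"
| "trm_subst (Lam x t) a u = (if x = a then Lam x t else Lam x (trm_subst t a u))"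
| "trm_subst (App t1 t2) a u = App (trm_subst t1 a u) (trm_subst t2 a u)"

fun never_applied :: "nat \<Rightarrow> trm \<Rightarrow> bool" where
  "never_applied a (Var x) = True"
| "never_applied a (Lam x t) = (x = a \<or> never_applied a t)"
| "never_applied a (App u v) = (u \<noteq> Var a \<and> never_applied a u \<and> never_applied a v)"

lemma typing_Var_tO:
  "typing b \<Gamma> (Var x) A \<Longrightarrow> map_of \<Gamma> x = Some tO \<Longrightarrow> A = tO"
proof (induction \<Gamma> "Var x" A rule: typing.induct)
  case (all_i b \<Gamma> A)
  then show ?case by (simp add: map_of_map_snd tO_def)
qed (auto simp: tO_def)

lemma never_applied_if_typed_tO:
  "typing b \<Gamma> t A \<Longrightarrow> map_of \<Gamma> a = Some tO \<Longrightarrow> never_applied a t"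
proof (induction rule: typing.induct)
  case (arr_e b \<Gamma> u B C v)
  then show ?case using typing_Var_tO[of b \<Gamma> a "Arr B C"] by (auto simp: tO_def)
next
  case (arr_i B b x \<Gamma> t C)
  then show ?case by (cases "x = a") auto
next
  case (all_i b \<Gamma> t A)
  then show ?case by (simp add: map_of_map_snd tO_def)
qed auto

lemma normal_trm_subst:
  "normal t \<Longrightarrow> never_applied a t \<Longrightarrow> normal u \<Longrightarrow> normal (trm_subst t a u)"
proof (induction t)
  case (App t1 t2)
  have "\<forall>x s. trm_subst t1 a u \<noteq> Lam x s"
    using App.prems by (cases t1) auto
  with App show ?case by auto
qed auto

lemma fv_trm_subst_closed: "fv u = {} \<Longrightarrow> fv (trm_subst t a u) \<subseteq> fv t - {a}"
  by (induction t) auto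

lemma typing_trm_subst:
  assumes "typing b \<Gamma> t A" "map_of \<Gamma> a = Some D" "closed_ty D"
    and "\<And>\<Gamma>'. typing b \<Gamma>' u D"
  shows "typing b \<Gamma> (trm_subst t a u) A"
  using assms
proof (induction rule: typing.induct)
  case (all_i b \<Gamma> t A)
  have "lift 0 D = D" using all_i.prems(2) lift_closed_at by (simp add: closed_ty_def)
  with all_i show ?case by (auto intro!: typing.all_i simp: map_of_map_snd)
qed (auto intro: typing.intros)

lemma typing_fv_cong:
  "typing b \<Gamma> t A \<Longrightarrow> (\<forall>x\<in>fv t. map_of \<Gamma>' x = map_of \<Gamma> x) \<Longrightarrow> typing b \<Gamma>' t A"
proof (induction arbitrary: \<Gamma>' rule: typing.induct)
  case (all_i b \<Gamma> t A)
  then show ?case by (auto intro!: typing.all_i simp: map_of_map_snd)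
next
  case (arr_i B b x \<Gamma> t C)
  then show ?case by (auto intro!: typing.arr_i)
qed (auto intro: typing.ax typing.arr_e typing.all_e)

lemma fv_subset_dom_if_typing: "typing b \<Gamma> t A \<Longrightarrow> fv t \<subseteq> dom (map_of \<Gamma>)"
proof (induction rule: typing.induct)
  case (arr_i B b x \<Gamma> t C)
  then show ?case by (fastforce simp: subset_iff domIff split: if_splits)
next
  case (all_i b \<Gamma> t A)
  then show ?case by (auto simp: map_of_map_snd)
qed auto

fun lambda_prefix :: "trm \<Rightarrow> nat" where
  "lambda_prefix (Lam x t) = Suc (lambda_prefix t)"
| "lambda_prefix _ = 0"

fun max_lambda_prefix :: "trm \<Rightarrow> nat" where
  "max_lambda_prefix (Var x) = 0"
| "max_lambda_prefix (Lam x t) = max (Suc (lambda_prefix t)) (max_lambda_prefix t)"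
| "max_lambda_prefix (App u v) = max (max_lambda_prefix u) (max_lambda_prefix v)"

lemma lambda_prefix_le_max_trm_subst:
  "a \<in> fv t \<Longrightarrow> lambda_prefix u \<le> max_lambda_prefix (trm_subst t a u)"
proof (induction t)
  case (Var x)
  then show ?case by (cases u) auto
qed auto

fun proj_last :: "nat \<Rightarrow> trm" where
  "proj_last 0 = Lam 0 (Var 0)"
| "proj_last (Suc k) = Lam 0 (proj_last k)"

fun proj_last_ty :: "nat \<Rightarrow> ty" where
  "proj_last_ty 0 = Arr (TV 0) (TV 0)"
| "proj_last_ty (Suc k) = Arr (TV 0) (proj_last_ty k)"

lemma typing_proj_last: "typing b \<Gamma> (proj_last k) (proj_last_ty k)"
  by (induction k arbitrary: \<Gamma>) (auto intro!: typing.arr_i typing.ax)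

lemma occurs_proj_last_ty: "occurs 0 (proj_last_ty k)"
  by (induction k) auto

lemma proper_proj_last_ty: "proper (proj_last_ty k)"
  by (induction k) auto

lemma closed_at_proj_last_ty: "closed_at 1 (proj_last_ty k)"
  by (induction k) auto

lemma normal_proj_last: "normal (proj_last k)"
  by (induction k) auto

lemma fv_proj_last: "fv (proj_last k) = {}"
  by (induction k) auto

lemma lambda_prefix_proj_last: "lambda_prefix (proj_last k) = Suc k"
  by (induction k) auto

lemma typing_proj_last_All: "typing b \<Gamma> (proj_last k) (All (proj_last_ty k))"
  by (auto intro!: typing.all_i typing_proj_last occurs_proj_last_ty)

lemma lambda_prefix_le_size_F0: "typF0 \<Gamma> t A \<Longrightarrow> lambda_prefix t \<le> size A"
  by (induction "False" \<Gamma> t A rule: typing.induct) auto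

text \<open>Without \<open>\<forall>\<close>-elimination, an arrow type of a neutral term is a subterm of a context type.\<close>

lemma size_arrow_neutral_F0:
  assumes "typF0 \<Gamma> t A" "normal t" "\<forall>x s. t \<noteq> Lam x s"
    and "\<forall>(y, T)\<in>set \<Gamma>. size T \<le> N" "A = Arr B C"
  shows "size A \<le> N"
  using assms
proof (induction "False" \<Gamma> t A arbitrary: B C rule: typing.induct)
  case (ax \<Gamma> x A)
  then show ?case by (fastforce dest: map_of_SomeD)
next
  case (arr_e \<Gamma> u B' C' v)
  then have "size (Arr B' C') \<le> N" by (cases u) auto
  with arr_e.prems(4) show ?case by simp
qed auto

lemma max_lambda_prefix_le_F0:
  assumes "typF0 \<Gamma> t A" "normal t"
    and "\<forall>(y, T)\<in>set \<Gamma>. size T \<le> N" "size A \<le> N"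
  shows "max_lambda_prefix t \<le> N"
  using assms
proof (induction "False" \<Gamma> t A rule: typing.induct)
  case (arr_i B x \<Gamma> t C)
  then have "lambda_prefix t \<le> size C" by (auto intro: lambda_prefix_le_size_F0)
  with arr_i show ?case by auto
next
  case (arr_e \<Gamma> u B C v)
  have "size (Arr B C) \<le> N"
    using arr_e by (intro size_arrow_neutral_F0[of \<Gamma> u _ N B C]) auto
  with arr_e show ?case by auto
next
  case (all_i \<Gamma> t A)
  then show ?case by (fastforce intro: all_i.hyps(2))
qed auto

lemma typF_trm_subst_proj_last:
  assumes t: "typF [(\<alpha>, tO)] t E" and E: "\<not> has_O E"
  shows "typF [] (trm_subst t \<alpha> (proj_last k)) E"
proof -
  let ?D = "All (proj_last_ty k)"
  have D: "closed_ty ?D" "proper ?D"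
    using closed_at_proj_last_ty occurs_proj_last_ty proper_proj_last_ty
    by (auto simp: closed_ty_def)
  have "typF [(\<alpha>, ?D)] t E"
    using typing_replace_O[OF t D] E by (simp add: replace_O_no_O tO_def)
  then have "typF [(\<alpha>, ?D)] (trm_subst t \<alpha> (proj_last k)) E"
    using D(1) typing_proj_last_All by (auto intro: typing_trm_subst)
  moreover have "fv (trm_subst t \<alpha> (proj_last k)) = {}"
    using fv_subset_dom_if_typing[OF t] fv_trm_subst_closed[OF fv_proj_last, of t \<alpha>] by auto
  ultimately show ?thesis by (auto intro: typing_fv_cong)
qed

lemma tO_var_not_free_if_input_type:
  assumes "input_type E" "\<not> has_O E" "normal t" "typF [(\<alpha>, tO)] t E"
  shows "\<alpha> \<notin> fv t"
proof
  assume \<alpha>: "\<alpha> \<in> fv t"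
  let ?s = "trm_subst t \<alpha> (proj_last (size E))"
  have "normal ?s"
    using normal_trm_subst[OF assms(3) never_applied_if_typed_tO[OF assms(4)] normal_proj_last]
    by simp
  moreover have "typF0 [] ?s E"
    using assms calculation typF_trm_subst_proj_last by (auto simp: input_type_def)
  ultimately have "max_lambda_prefix ?s \<le> size E"
    by (auto intro: max_lambda_prefix_le_F0)
  moreover have "Suc (size E) \<le> max_lambda_prefix ?s"
    using lambda_prefix_le_max_trm_subst[OF \<alpha>, of "proj_last (size E)"]
    by (simp add: lambda_prefix_proj_last)
  ultimately show False by simp
qed

theorem theorem2p2p8:
  assumes "proper E" and "closed_ty E" and "\<not> has_O E"
    and "input_type E"
  shows "output_type E"
  using assms tO_var_not_free_if_input_type by (auto simp: output_type_def)

end
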